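(* Let $G=(V,E)$ be a locally finite, connected graph with symmetric edge weights and a uniformly positive measure, let $\alpha,\beta>1$, and let $\Omega_a,\Omega_b\subset V$ be such that $\Omega_a$, $\Omega_b$ and $\Omega_a\cap\Omega_b$ are non-empty bounded domains. Then the Dirichlet system $$-\Delta u+u=\tfrac{\alpha}{\alpha+\beta}|u|^{\alpha-2}u|v|^\beta\ \text{in }\Omega_a,\quad -\Delta v+v=\tfrac{\beta}{\alpha+\beta}|u|^{\alpha}|v|^{\beta-2}v\ \text{in }\Omega_b,\quad u=0\text{ on }\partial\Omega_a,\ v=0\text{ on }\partial\Omega_b$$ has a ground state solution $(u_\Omega,v_\Omega)\in H_\Omega$, i.e. a weak solution with $(u_\Omega,v_\Omega)\in\mathcal N_\Omega$ and $J_\Omega(u_\Omega,v_\Omega)=c_{\mathcal N_\Omega}$.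
   Context: $G=(V,E)$: $w_{xy}=w_{yx}>0$ for each edge $xy$ ($y\sim x$); $\mu:V\to(0,\infty)$, $\mu\ge\mu_{\min}>0$. $\Delta u(x)=\frac1{\mu(x)}\sum_{y\sim x}w_{xy}(u(y)-u(x))$, $\Gamma(u,v)(x)=\frac1{2\mu(x)}\sum_{y\sim x}w_{xy}(u(y)-u(x))(v(y)-v(x))$, $|\nabla u|^2=\Gamma(u,u)$, $\int_A f\,d\mu=\sum_{x\in A}\mu(x)f(x)$. A bounded domain is a set of vertices with uniformly bounded mutual graph distance. For $\Omega\subset V$: $\partial\Omega=\{y\notin\Omega:\exists x\in\Omega,\ xy\in E\}$, $\overline\Omega=\Omega\cup\partial\Omega$. $W_0^{1,2}(\Omega)$ is the completion of $C_c(\Omega)=\{u:V\to\mathbb{R}$ with support in $\Omega$ (so $u=0$ on $\partial\Omega$)$\}$ under $\|u\|=(\int_{\overline\Omega}|\nabla u|^2d\mu+\int_\Omega u^2d\mu)^{1/2}$. $H_\Omega=W_0^{1,2}(\Omega_a)\times W_0^{1,2}(\Omega_b)$ with inner product $\langle(u,v),(\xi,\eta)\rangle_{H_\Omega}=\int_{\overline\Omega_a\cup\overline\Omega_b}(\Gamma(u,\xi)+\Gamma(v,\eta))d\mu+\int_{\Omega_a\cup\Omega_b}(u\xi+v\eta)d\mu$. $J_\Omega(u,v)=\frac12\int_{\overline\Omega_a\cup\overline\Omega_b}(|\nabla u|^2+|\nabla v|^2)d\mu+\frac12\int_{\Omega_a\cup\Omega_b}(u^2+v^2)d\mu-\frac1{\alpha+\beta}\int_{\Omega_a\cup\Omega_b}|u|^\alpha|v|^\beta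 d\mu$. A weak solution is $(u,v)\in H_\Omega$ with $\langle(u,v),(\xi,\eta)\rangle_{H_\Omega}=\int_{\Omega_a\cup\Omega_b}(\frac{\alpha}{\alpha+\beta}|u|^{\alpha-2}u|v|^\beta\xi+\frac{\beta}{\alpha+\beta}|u|^\alpha|v|^{\beta-2}v\eta)d\mu$ for all $(\xi,\eta)\in H_\Omega$. $\mathcal N_\Omega=\{(u,v)\in H_\Omega\setminus\{(0,0)\}:\langle J_\Omega'(u,v),(u,v)\rangle=0\}$, $c_{\mathcal N_\Omega}=\inf_{\mathcal N_\Omega}J_\Omega$. *)

theory Defs
  imports "HOL-Analysis.Analysis"
begin

text \<open>Weighted graph on vertex type 'v: xy is an edge iff w x y > 0 (w x y = 0 otherwise).\<close>

definition edge_rel :: "('v \<Rightarrow> 'v \<Rightarrow> real) \<Rightarrow> ('v \<times> 'v) set" where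
  "edge_rel w = {(x, y). w x y > 0}"

definition nbrs :: "('v \<Rightarrow> 'v \<Rightarrow> real) \<Rightarrow> 'v \<Rightarrow> 'v set" where
  "nbrs w x = {y. w x y > 0}"

definition weighted_graph :: "('v \<Rightarrow> 'v \<Rightarrow> real) \<Rightarrow> bool" where
  "weighted_graph w \<longleftrightarrow> (\<forall>x y. w x y = w y x) \<and> (\<forall>x y. w x y \<ge> 0)"

definition locally_finite :: "('v \<Rightarrow> 'v \<Rightarrow> real) \<Rightarrow> bool" where
  "locally_finite w \<longleftrightarrow> (\<forall>x. finite (nbrs w x))"

definition graph_connected :: "('v \<Rightarrow> 'v \<Rightarrow> real) \<Rightarrow> bool" where
  "graph_connected w \<longleftrightarrow> (\<forall>x y. (x, y) \<in> (edge_rel w)\<^sup>*)"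

definition bounded_domain :: "('v \<Rightarrow> 'v \<Rightarrow> real) \<Rightarrow> 'v set \<Rightarrow> bool" where
  "bounded_domain w \<Omega> \<longleftrightarrow>
     (\<exists>R::nat. \<forall>x\<in>\<Omega>. \<forall>y\<in>\<Omega>. \<exists>n\<le>R. (x, y) \<in> (edge_rel w) ^^ n)"

definition laplacian :: "('v \<Rightarrow> 'v \<Rightarrow> real) \<Rightarrow> ('v \<Rightarrow> real) \<Rightarrow> ('v \<Rightarrow> real) \<Rightarrow> 'v \<Rightarrow> real" where
  "laplacian w \<mu> u x = (1 / \<mu> x) * (\<Sum>y\<in>nbrs w x. w x y * (u y - u x))"

definition Gam :: "('v \<Rightarrow> 'v \<Rightarrow> real) \<Rightarrow> ('v \<Rightarrow> real) \<Rightarrow> ('v \<Rightarrow> real) \<Rightarrow> ('v \<Rightarrow> real) \<Rightarrow> 'v \<Rightarrow> real" where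
  "Gam w \<mu> u v x = (1 / (2 * \<mu> x)) * (\<Sum>y\<in>nbrs w x. w x y * (u y - u x) * (v y - v x))"

definition integ :: "('v \<Rightarrow> real) \<Rightarrow> 'v set \<Rightarrow> ('v \<Rightarrow> real) \<Rightarrow> real" where
  "integ \<mu> A f = (\<Sum>x\<in>A. \<mu> x * f x)"

definition bdry :: "('v \<Rightarrow> 'v \<Rightarrow> real) \<Rightarrow> 'v set \<Rightarrow> 'v set" where
  "bdry w \<Omega> = {y. y \<notin> \<Omega> \<and> (\<exists>x\<in>\<Omega>. w x y > 0)}"

definition cl :: "('v \<Rightarrow> 'v \<Rightarrow> real) \<Rightarrow> 'v set \<Rightarrow> 'v set" where
  "cl w \<Omega> = \<Omega> \<union> bdry w \<Omega>"

text \<open>W_0^{1,2}(\<Omega>) for a (finite) bounded domain: functions supported in \<Omega>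
  (C_c(\<Omega>) is finite dimensional, hence already complete).\<close>
definition W0 :: "'v set \<Rightarrow> ('v \<Rightarrow> real) set" where
  "W0 \<Omega> = {u. \<forall>x. x \<notin> \<Omega> \<longrightarrow> u x = 0}"

definition H_Om :: "'v set \<Rightarrow> 'v set \<Rightarrow> (('v \<Rightarrow> real) \<times> ('v \<Rightarrow> real)) set" where
  "H_Om \<Omega>a \<Omega>b = W0 \<Omega>a \<times> W0 \<Omega>b"

definition inner_H ::
  "('v \<Rightarrow> 'v \<Rightarrow> real) \<Rightarrow> ('v \<Rightarrow> real) \<Rightarrow> 'v set \<Rightarrow> 'v set \<Rightarrow>
   ('v \<Rightarrow> real) \<Rightarrow> ('v \<Rightarrow> real) \<Rightarrow> ('v \<Rightarrow> real) \<Rightarrow> ('v \<Rightarrow> real) \<Rightarrow> real" where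
  "inner_H w \<mu> \<Omega>a \<Omega>b u v \<xi> \<eta> =
     integ \<mu> (cl w \<Omega>a \<union> cl w \<Omega>b) (\<lambda>x. Gam w \<mu> u \<xi> x + Gam w \<mu> v \<eta> x)
   + integ \<mu> (\<Omega>a \<union> \<Omega>b) (\<lambda>x. u x * \<xi> x + v x * \<eta> x)"

definition J_Om ::
  "('v \<Rightarrow> 'v \<Rightarrow> real) \<Rightarrow> ('v \<Rightarrow> real) \<Rightarrow> 'v set \<Rightarrow> 'v set \<Rightarrow> real \<Rightarrow> real \<Rightarrow>
   ('v \<Rightarrow> real) \<Rightarrow> ('v \<Rightarrow> real) \<Rightarrow> real" where
  "J_Om w \<mu> \<Omega>a \<Omega>b \<alpha> \<beta> u v =
     1/2 * integ \<mu> (cl w \<Omega>a \<union> cl w \<Omega>b) (\<lambda>x. Gam w \<mu> u u x + Gam w \<mu> v v x)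
   + 1/2 * integ \<mu> (\<Omega>a \<union> \<Omega>b) (\<lambda>x. (u x)\<^sup>2 + (v x)\<^sup>2)
   - 1 / (\<alpha> + \<beta>) * integ \<mu> (\<Omega>a \<union> \<Omega>b) (\<lambda>x. \<bar>u x\<bar> powr \<alpha> * \<bar>v x\<bar> powr \<beta>)"

text \<open>Weak solution. |u|^{\<alpha>-2}u is written with powr (0 powr _ = 0, matching the
  convention |u|^{\<alpha>-2}u = 0 at u = 0).\<close>
definition weak_solution ::
  "('v \<Rightarrow> 'v \<Rightarrow> real) \<Rightarrow> ('v \<Rightarrow> real) \<Rightarrow> 'v set \<Rightarrow> 'v set \<Rightarrow> real \<Rightarrow> real \<Rightarrow>
   ('v \<Rightarrow> real) \<Rightarrow> ('v \<Rightarrow> real) \<Rightarrow> bool" where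
  "weak_solution w \<mu> \<Omega>a \<Omega>b \<alpha> \<beta> u v \<longleftrightarrow>
     (u, v) \<in> H_Om \<Omega>a \<Omega>b \<and>
     (\<forall>\<xi> \<eta>. (\<xi>, \<eta>) \<in> H_Om \<Omega>a \<Omega>b \<longrightarrow>
        inner_H w \<mu> \<Omega>a \<Omega>b u v \<xi> \<eta> =
        integ \<mu> (\<Omega>a \<union> \<Omega>b) (\<lambda>x.
            \<alpha> / (\<alpha> + \<beta>) * \<bar>u x\<bar> powr (\<alpha> - 2) * u x * \<bar>v x\<bar> powr \<beta> * \<xi> x
          + \<beta> / (\<alpha> + \<beta>) * \<bar>u x\<bar> powr \<alpha> * \<bar>v x\<bar> powr (\<beta> - 2) * v x * \<eta> x))"

text \<open>Nehari manifold: \<langle>J'(u,v),(u,v)\<rangle> = 0, the derivative of J in direction (u,v),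
  i.e. d/dt J((1+t)u,(1+t)v) at t = 0.\<close>
definition nehari ::
  "('v \<Rightarrow> 'v \<Rightarrow> real) \<Rightarrow> ('v \<Rightarrow> real) \<Rightarrow> 'v set \<Rightarrow> 'v set \<Rightarrow> real \<Rightarrow> real \<Rightarrow>
   (('v \<Rightarrow> real) \<times> ('v \<Rightarrow> real)) set" where
  "nehari w \<mu> \<Omega>a \<Omega>b \<alpha> \<beta> =
     {(u, v). (u, v) \<in> H_Om \<Omega>a \<Omega>b \<and> (u, v) \<noteq> (\<lambda>_. 0, \<lambda>_. 0) \<and>
        ((\<lambda>t. J_Om w \<mu> \<Omega>a \<Omega>b \<alpha> \<beta> (\<lambda>x. u x + t * u x) (\<lambda>x. v x + t * v x))
           has_real_derivative 0) (at 0)}"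

definition c_nehari ::
  "('v \<Rightarrow> 'v \<Rightarrow> real) \<Rightarrow> ('v \<Rightarrow> real) \<Rightarrow> 'v set \<Rightarrow> 'v set \<Rightarrow> real \<Rightarrow> real \<Rightarrow> real" where
  "c_nehari w \<mu> \<Omega>a \<Omega>b \<alpha> \<beta> =
     Inf ((\<lambda>(u, v). J_Om w \<mu> \<Omega>a \<Omega>b \<alpha> \<beta> u v) ` nehari w \<mu> \<Omega>a \<Omega>b \<alpha> \<beta>)"

end

theory Submission
  imports Defs
begin

text \<open>Bounded domains of a locally finite graph are finite, so \<open>H_\<Omega>\<close> is finite dimensional.
  With \<open>p = \<alpha> + \<beta> > 2\<close> and \<open>F(u,v) = \<integral>|u|\<^sup>\<alpha>|v|\<^sup>\<beta>\<close>, the Rayleigh quotient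
  \<open>\<parallel>(u,v)\<parallel>\<^sup>2 / F(u,v)\<^bsup>2/p\<^esup>\<close> is invariant under scaling, so its infimum over \<open>{F > 0}\<close> is the
  minimum of \<open>\<parallel>\<cdot>\<parallel>\<^sup>2\<close> over the compact set \<open>{F = 1, \<parallel>\<cdot>\<parallel>\<^sup>2 \<le> c}\<close>, which is non-empty because
  \<open>\<Omega>a \<inter> \<Omega>b \<noteq> {}\<close>. Differentiating the quotient at a minimizer \<open>(u,v)\<close> in every direction gives
  \<open>\<langle>(u,v),(\<xi>,\<eta>)\<rangle> = \<parallel>(u,v)\<parallel>\<^sup>2 F'(u,v)(\<xi>,\<eta>) / p\<close>, and rescaling by
  \<open>t = \<parallel>(u,v)\<parallel>\<^bsup>2/(p-2)\<^esup>\<close> turns this into the weak equation and puts \<open>(tu,tv)\<close> on the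
  Nehari manifold. There \<open>J = (1/2 - 1/p)\<parallel>\<cdot>\<parallel>\<^sup>2\<close> and \<open>\<parallel>\<cdot>\<parallel>\<^sup>2 = F\<close>, so the bound on the quotient
  yields \<open>\<parallel>\<cdot>\<parallel>\<^sup>2 \<ge> t\<^sup>p\<close> on the Nehari manifold, i.e. \<open>(tu,tv)\<close> minimizes \<open>J\<close> there.\<close>

lemma finite_relpow_Image:
  assumes "locally_finite w"
  shows "finite {y. (x, y) \<in> edge_rel w ^^ n}"
proof (induction n)
  case (Suc n)
  have "{y. (x, y) \<in> edge_rel w ^^ Suc n} = (\<Union>z\<in>{y. (x, y) \<in> edge_rel w ^^ n}. nbrs w z)"
    unfolding relpow.simps edge_rel_def nbrs_def by blast
  then show ?case using Suc assms by (simp add: locally_finite_def)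
qed simp

lemma bounded_domain_finite:
  assumes "locally_finite w" "bounded_domain w \<Omega>"
  shows "finite \<Omega>"
proof (cases "\<Omega> = {}")
  case False
  then obtain x0 where "x0 \<in> \<Omega>" by auto
  moreover obtain R where "\<forall>x\<in>\<Omega>. \<forall>y\<in>\<Omega>. \<exists>n\<le>R. (x, y) \<in> edge_rel w ^^ n"
    using assms(2) by (auto simp: bounded_domain_def)
  ultimately have "\<Omega> \<subseteq> (\<Union>n\<le>R. {y. (x0, y) \<in> edge_rel w ^^ n})"
    by blast
  then show ?thesis
    using finite_relpow_Image[OF assms(1)] by (auto intro: finite_subset)
qed simp

section \<open>Differentiability of \<open>\<bar>x\<bar> powr \<alpha>\<close>\<close>

lemma has_real_derivative_abs_powr_at_zero:
  fixes \<alpha> :: real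
  assumes "\<alpha> > 1"
  shows "((\<lambda>x. \<bar>x\<bar> powr \<alpha>) has_real_derivative 0) (at 0)"
proof -
  have "((\<lambda>h. \<bar>h\<bar> powr (\<alpha> - 1)) \<longlongrightarrow> 0) (at (0::real))"
    by (rule tendsto_zero_powrI) (auto intro!: tendsto_eq_intros simp: assms)
  then have "((\<lambda>h. (\<bar>0 + h\<bar> powr \<alpha> - \<bar>0\<bar> powr \<alpha>) / h) \<longlongrightarrow> 0) (at (0::real))"
  proof (rule Lim_null_comparison[rotated])
    show "\<forall>\<^sub>F h in at 0. norm ((\<bar>0 + h\<bar> powr \<alpha> - \<bar>0\<bar> powr \<alpha>) / h) \<le> \<bar>h\<bar> powr (\<alpha> - 1)"
      by (auto simp: eventually_at_filter powr_diff)
  qed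
  then show ?thesis by (simp only: DERIV_def)
qed

lemma has_real_derivative_abs_powr_at:
  fixes \<alpha> x :: real
  assumes "\<alpha> > 1"
  shows "((\<lambda>x. \<bar>x\<bar> powr \<alpha>) has_real_derivative \<alpha> * \<bar>x\<bar> powr (\<alpha> - 2) * x) (at x)"
proof (cases "x = 0")
  case True
  then show ?thesis using has_real_derivative_abs_powr_at_zero[OF assms] by simp
next
  case False
  have "\<forall>\<^sub>F y in nhds x. \<bar>y\<bar> = sgn x * y"
  proof -
    have "((\<lambda>y. y * x) \<longlongrightarrow> x * x) (nhds x)"
      by (intro tendsto_intros) (rule filterlim_ident)
    moreover have "x * x > 0"
      using False by (simp add: zero_less_mult_iff linorder_neq_iff disj_commute)
    ultimately have "\<forall>\<^sub>F y in nhds x. y * x > 0"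
      by (rule order_tendstoD)
    then show ?thesis
      by eventually_elim (auto simp: zero_less_mult_iff)
  qed
  then have "((\<lambda>y. \<bar>y\<bar>) has_real_derivative sgn x) (at x)"
    by (subst DERIV_cong_ev[OF refl _ refl]) (auto intro!: derivative_eq_intros)
  then have "((\<lambda>y. \<bar>y\<bar> powr \<alpha>) has_real_derivative \<alpha> * \<bar>x\<bar> powr (\<alpha> - 1) * sgn x) (at x)"
    using DERIV_fun_powr[of abs "sgn x" x \<alpha>] False by simp
  moreover have "\<bar>x\<bar> powr (\<alpha> - 1) * sgn x = \<bar>x\<bar> powr (\<alpha> - 2) * x"
    using False by (cases "x > 0") (auto simp: powr_diff field_simps power2_eq_square)
  ultimately show ?thesis by (simp add: mult.assoc)
qed

lemma has_real_derivative_abs_powr[derivative_intros]: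
  fixes \<alpha> :: real
  assumes "\<alpha> > 1" "(f has_real_derivative f') (at x within S)"
  shows "((\<lambda>x. \<bar>f x\<bar> powr \<alpha>) has_real_derivative \<alpha> * \<bar>f x\<bar> powr (\<alpha> - 2) * f x * f') (at x within S)"
  using DERIV_chain'[OF assms(2) has_real_derivative_abs_powr_at[OF assms(1)]] .

section \<open>The energy functional and the Nehari manifold\<close>

definition norm2_H ::
  "('v \<Rightarrow> 'v \<Rightarrow> real) \<Rightarrow> ('v \<Rightarrow> real) \<Rightarrow> 'v set \<Rightarrow> 'v set \<Rightarrow> ('v \<Rightarrow> real) \<Rightarrow> ('v \<Rightarrow> real) \<Rightarrow> real"
  where "norm2_H w \<mu> \<Omega>a \<Omega>b u v = inner_H w \<mu> \<Omega>a \<Omega>b u v u v"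

definition coupling ::
  "('v \<Rightarrow> real) \<Rightarrow> 'v set \<Rightarrow> 'v set \<Rightarrow> real \<Rightarrow> real \<Rightarrow> ('v \<Rightarrow> real) \<Rightarrow> ('v \<Rightarrow> real) \<Rightarrow> real"
  where "coupling \<mu> \<Omega>a \<Omega>b \<alpha> \<beta> u v = integ \<mu> (\<Omega>a \<union> \<Omega>b) (\<lambda>x. \<bar>u x\<bar> powr \<alpha> * \<bar>v x\<bar> powr \<beta>)"

definition coupling_deriv ::
  "('v \<Rightarrow> real) \<Rightarrow> 'v set \<Rightarrow> 'v set \<Rightarrow> real \<Rightarrow> real \<Rightarrow>
   ('v \<Rightarrow> real) \<Rightarrow> ('v \<Rightarrow> real) \<Rightarrow> ('v \<Rightarrow> real) \<Rightarrow> ('v \<Rightarrow> real) \<Rightarrow> real"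
  where "coupling_deriv \<mu> \<Omega>a \<Omega>b \<alpha> \<beta> u v \<xi> \<eta> = integ \<mu> (\<Omega>a \<union> \<Omega>b) (\<lambda>x.
     \<alpha> * \<bar>u x\<bar> powr (\<alpha> - 2) * u x * \<bar>v x\<bar> powr \<beta> * \<xi> x
   + \<beta> * \<bar>u x\<bar> powr \<alpha> * \<bar>v x\<bar> powr (\<beta> - 2) * v x * \<eta> x)"

lemma J_Om_eq:
  "J_Om w \<mu> \<Omega>a \<Omega>b \<alpha> \<beta> u v = norm2_H w \<mu> \<Omega>a \<Omega>b u v / 2 - coupling \<mu> \<Omega>a \<Omega>b \<alpha> \<beta> u v / (\<alpha> + \<beta>)"
  unfolding J_Om_def norm2_H_def coupling_def inner_H_def integ_def
  by (simp add: power2_eq_square sum_distrib_left sum_divide_distrib algebra_simps)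

lemma weak_solution_iff:
  "weak_solution w \<mu> \<Omega>a \<Omega>b \<alpha> \<beta> u v \<longleftrightarrow> (u, v) \<in> H_Om \<Omega>a \<Omega>b \<and>
     (\<forall>\<xi> \<eta>. (\<xi>, \<eta>) \<in> H_Om \<Omega>a \<Omega>b \<longrightarrow>
        inner_H w \<mu> \<Omega>a \<Omega>b u v \<xi> \<eta> = coupling_deriv \<mu> \<Omega>a \<Omega>b \<alpha> \<beta> u v \<xi> \<eta> / (\<alpha> + \<beta>))"
proof -
  have "integ \<mu> (\<Omega>a \<union> \<Omega>b) (\<lambda>x.
            \<alpha> / (\<alpha> + \<beta>) * \<bar>u x\<bar> powr (\<alpha> - 2) * u x * \<bar>v x\<bar> powr \<beta> * \<xi> x
          + \<beta> / (\<alpha> + \<beta>) * \<bar>u x\<bar> powr \<alpha> * \<bar>v x\<bar> powr (\<beta> - 2) * v x * \<eta> x)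
        = coupling_deriv \<mu> \<Omega>a \<Omega>b \<alpha> \<beta> u v \<xi> \<eta> / (\<alpha> + \<beta>)" for \<xi> \<eta>
    unfolding coupling_deriv_def integ_def sum_divide_distrib
    by (rule sum.cong) (auto simp: add_divide_distrib algebra_simps)
  then show ?thesis unfolding weak_solution_def by simp
qed

lemma H_Om_add_scaled:
  "(u, v) \<in> H_Om \<Omega>a \<Omega>b \<Longrightarrow> (\<xi>, \<eta>) \<in> H_Om \<Omega>a \<Omega>b \<Longrightarrow>
   (\<lambda>x. u x + s * \<xi> x, \<lambda>x. v x + s * \<eta> x) \<in> H_Om \<Omega>a \<Omega>b"
  by (auto simp: H_Om_def W0_def)

lemma H_Om_scale: "(u, v) \<in> H_Om \<Omega>a \<Omega>b \<Longrightarrow> (\<lambda>x. a * u x, \<lambda>x. a * v x) \<in> H_Om \<Omega>a \<Omega>b"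
  by (auto simp: H_Om_def W0_def)

lemma Gam_scale: "Gam w \<mu> (\<lambda>x. a * u x) (\<lambda>x. b * v x) y = a * b * Gam w \<mu> u v y"
  unfolding Gam_def by (simp add: sum_distrib_left algebra_simps)

lemma Gam_add_scaled:
  "Gam w \<mu> (\<lambda>x. u x + s * \<xi> x) (\<lambda>x. u x + s * \<xi> x) y
   = Gam w \<mu> u u y + 2 * s * Gam w \<mu> u \<xi> y + s\<^sup>2 * Gam w \<mu> \<xi> \<xi> y"
proof -
  have "(\<Sum>z\<in>nbrs w y. w y z * (u z + s * \<xi> z - (u y + s * \<xi> y)) * (u z + s * \<xi> z - (u y + s * \<xi> y)))
      = (\<Sum>z\<in>nbrs w y. w y z * (u z - u y) * (u z - u y)
           + 2 * s * (w y z * (u z - u y) * (\<xi> z - \<xi> y)) + s\<^sup>2 * (w y z * (\<xi> z - \<xi> y) * (\<xi> z - \<xi> y)))"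
    by (rule sum.cong) (auto simp: algebra_simps power2_eq_square)
  also have "\<dots> = (\<Sum>z\<in>nbrs w y. w y z * (u z - u y) * (u z - u y))
      + 2 * s * (\<Sum>z\<in>nbrs w y. w y z * (u z - u y) * (\<xi> z - \<xi> y))
      + s\<^sup>2 * (\<Sum>z\<in>nbrs w y. w y z * (\<xi> z - \<xi> y) * (\<xi> z - \<xi> y))"
    by (simp add: sum.distrib sum_distrib_left)
  finally show ?thesis
    unfolding Gam_def by (simp add: algebra_simps)
qed

lemma norm2_H_add_scaled:
  "norm2_H w \<mu> \<Omega>a \<Omega>b (\<lambda>x. u x + s * \<xi> x) (\<lambda>x. v x + s * \<eta> x)
   = norm2_H w \<mu> \<Omega>a \<Omega>b u v + 2 * s * inner_H w \<mu> \<Omega>a \<Omega>b u v \<xi> \<eta> + s\<^sup>2 * norm2_H w \<mu> \<Omega>a \<Omega>b \<xi> \<eta>"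
  unfolding norm2_H_def inner_H_def Gam_add_scaled integ_def
  by (simp add: sum.distrib sum_distrib_left power2_eq_square algebra_simps)

lemma norm2_H_scale: "norm2_H w \<mu> \<Omega>a \<Omega>b (\<lambda>x. a * u x) (\<lambda>x. a * v x) = a\<^sup>2 * norm2_H w \<mu> \<Omega>a \<Omega>b u v"
  unfolding norm2_H_def inner_H_def Gam_scale integ_def
  by (simp add: sum_distrib_left power2_eq_square algebra_simps)

lemma inner_H_scale:
  "inner_H w \<mu> \<Omega>a \<Omega>b (\<lambda>x. a * u x) (\<lambda>x. a * v x) \<xi> \<eta> = a * inner_H w \<mu> \<Omega>a \<Omega>b u v \<xi> \<eta>"
  using Gam_scale[of w \<mu> a _ 1] unfolding inner_H_def integ_def
  by (simp add: sum_distrib_left algebra_simps)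

lemma coupling_scale:
  "coupling \<mu> \<Omega>a \<Omega>b \<alpha> \<beta> (\<lambda>x. a * u x) (\<lambda>x. a * v x) = \<bar>a\<bar> powr (\<alpha> + \<beta>) * coupling \<mu> \<Omega>a \<Omega>b \<alpha> \<beta> u v"
  unfolding coupling_def integ_def
  by (simp add: sum_distrib_left abs_mult powr_mult powr_add algebra_simps)

lemma coupling_deriv_scale:
  assumes "a > 0"
  shows "coupling_deriv \<mu> \<Omega>a \<Omega>b \<alpha> \<beta> (\<lambda>x. a * u x) (\<lambda>x. a * v x) \<xi> \<eta>
    = a powr (\<alpha> + \<beta> - 1) * coupling_deriv \<mu> \<Omega>a \<Omega>b \<alpha> \<beta> u v \<xi> \<eta>"
proof -
  have "a powr (\<alpha> - 2) * a powr 1 * a powr \<beta> = a powr (\<alpha> + \<beta> - 1)"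
       "a powr \<alpha> * a powr (\<beta> - 2) * a powr 1 = a powr (\<alpha> + \<beta> - 1)"
    unfolding powr_add[symmetric] by (simp_all add: algebra_simps)
  then have e: "a powr (\<alpha> - 2) * a * a powr \<beta> = a powr (\<alpha> + \<beta> - 1)"
               "a powr \<alpha> * a powr (\<beta> - 2) * a = a powr (\<alpha> + \<beta> - 1)"
    using assms by simp_all
  show ?thesis
    unfolding coupling_deriv_def integ_def sum_distrib_left
  proof (rule sum.cong)
    fix x
    have "\<mu> x * (\<alpha> * \<bar>a * u x\<bar> powr (\<alpha> - 2) * (a * u x) * \<bar>a * v x\<bar> powr \<beta> * \<xi> x
            + \<beta> * \<bar>a * u x\<bar> powr \<alpha> * \<bar>a * v x\<bar> powr (\<beta> - 2) * (a * v x) * \<eta> x)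
        = \<mu> x * ((a powr (\<alpha> - 2) * a * a powr \<beta>) * (\<alpha> * \<bar>u x\<bar> powr (\<alpha> - 2) * u x * \<bar>v x\<bar> powr \<beta> * \<xi> x)
            + (a powr \<alpha> * a powr (\<beta> - 2) * a) * (\<beta> * \<bar>u x\<bar> powr \<alpha> * \<bar>v x\<bar> powr (\<beta> - 2) * v x * \<eta> x))"
      using assms by (simp add: abs_mult powr_mult)
    then show "\<mu> x * (\<alpha> * \<bar>a * u x\<bar> powr (\<alpha> - 2) * (a * u x) * \<bar>a * v x\<bar> powr \<beta> * \<xi> x
            + \<beta> * \<bar>a * u x\<bar> powr \<alpha> * \<bar>a * v x\<bar> powr (\<beta> - 2) * (a * v x) * \<eta> x)
        = a powr (\<alpha> + \<beta> - 1) * (\<mu> x * (\<alpha> * \<bar>u x\<bar> powr (\<alpha> - 2) * u x * \<bar>v x\<bar> powr \<beta> * \<xi> x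
            + \<beta> * \<bar>u x\<bar> powr \<alpha> * \<bar>v x\<bar> powr (\<beta> - 2) * v x * \<eta> x))"
      unfolding e by (simp add: algebra_simps)
  qed simp
qed

lemma coupling_has_real_derivative:
  assumes "\<alpha> > 1" "\<beta> > 1"
  shows "((\<lambda>s. coupling \<mu> \<Omega>a \<Omega>b \<alpha> \<beta> (\<lambda>x. u x + s * \<xi> x) (\<lambda>x. v x + s * \<eta> x))
           has_real_derivative coupling_deriv \<mu> \<Omega>a \<Omega>b \<alpha> \<beta> u v \<xi> \<eta>) (at 0)"
  unfolding coupling_def coupling_deriv_def integ_def
  by (auto intro!: derivative_eq_intros sum.cong simp: assms algebra_simps)

lemma norm2_H_has_real_derivative:
  "((\<lambda>s. norm2_H w \<mu> \<Omega>a \<Omega>b (\<lambda>x. u x + s * \<xi> x) (\<lambda>x. v x + s * \<eta> x))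
     has_real_derivative 2 * inner_H w \<mu> \<Omega>a \<Omega>b u v \<xi> \<eta>) (at 0)"
  unfolding norm2_H_add_scaled by (auto intro!: derivative_eq_intros)

lemma J_Om_radial_has_real_derivative:
  assumes "\<alpha> > 1" "\<beta> > 1"
  shows "((\<lambda>t. J_Om w \<mu> \<Omega>a \<Omega>b \<alpha> \<beta> (\<lambda>x. u x + t * u x) (\<lambda>x. v x + t * v x)) has_real_derivative
          norm2_H w \<mu> \<Omega>a \<Omega>b u v - coupling \<mu> \<Omega>a \<Omega>b \<alpha> \<beta> u v) (at 0)"
proof -
  have "(\<lambda>x. u x + t * u x) = (\<lambda>x. (1 + t) * u x)" "(\<lambda>x. v x + t * v x) = (\<lambda>x. (1 + t) * v x)" for t
    by (auto simp: algebra_simps)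
  then have "J_Om w \<mu> \<Omega>a \<Omega>b \<alpha> \<beta> (\<lambda>x. u x + t * u x) (\<lambda>x. v x + t * v x)
      = (1 + t)\<^sup>2 * norm2_H w \<mu> \<Omega>a \<Omega>b u v / 2
        - \<bar>1 + t\<bar> powr (\<alpha> + \<beta>) * coupling \<mu> \<Omega>a \<Omega>b \<alpha> \<beta> u v / (\<alpha> + \<beta>)" for t
    by (simp add: J_Om_eq norm2_H_scale coupling_scale)
  moreover have "((\<lambda>t. (1 + t)\<^sup>2 * norm2_H w \<mu> \<Omega>a \<Omega>b u v / 2
        - \<bar>1 + t\<bar> powr (\<alpha> + \<beta>) * coupling \<mu> \<Omega>a \<Omega>b \<alpha> \<beta> u v / (\<alpha> + \<beta>)) has_real_derivative
        norm2_H w \<mu> \<Omega>a \<Omega>b u v - coupling \<mu> \<Omega>a \<Omega>b \<alpha> \<beta> u v) (at 0)"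
    using assms by (auto intro!: derivative_eq_intros)
  ultimately show ?thesis by simp
qed

lemma nehari_iff:
  assumes "\<alpha> > 1" "\<beta> > 1"
  shows "(u, v) \<in> nehari w \<mu> \<Omega>a \<Omega>b \<alpha> \<beta> \<longleftrightarrow>
    (u, v) \<in> H_Om \<Omega>a \<Omega>b \<and> (u, v) \<noteq> (\<lambda>_. 0, \<lambda>_. 0) \<and> norm2_H w \<mu> \<Omega>a \<Omega>b u v = coupling \<mu> \<Omega>a \<Omega>b \<alpha> \<beta> u v"
  using DERIV_unique[OF J_Om_radial_has_real_derivative[OF assms]]
    J_Om_radial_has_real_derivative[OF assms, of w \<mu> \<Omega>a \<Omega>b u v]
  unfolding nehari_def by force

section \<open>Positivity and compactness\<close>

lemma Gam_self_nonneg: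
  assumes "weighted_graph w" "\<mu> y > 0"
  shows "Gam w \<mu> u u y \<ge> 0"
proof -
  have "w y z * (u z - u y) * (u z - u y) \<ge> 0" for z
    using assms(1) unfolding weighted_graph_def mult.assoc by simp
  then show ?thesis unfolding Gam_def using assms(2) by (simp add: sum_nonneg)
qed

lemma norm2_H_ge_point:
  assumes "weighted_graph w" "\<forall>x. \<mu> x > 0" "finite \<Omega>a" "finite \<Omega>b" "x \<in> \<Omega>a \<union> \<Omega>b"
  shows "\<mu> x * ((u x)\<^sup>2 + (v x)\<^sup>2) \<le> norm2_H w \<mu> \<Omega>a \<Omega>b u v"
proof -
  have "integ \<mu> (cl w \<Omega>a \<union> cl w \<Omega>b) (\<lambda>x. Gam w \<mu> u u x + Gam w \<mu> v v x) \<ge> 0"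
    unfolding integ_def using Gam_self_nonneg[OF assms(1)] assms(2)
    by (intro sum_nonneg) (simp add: less_imp_le)
  moreover have "\<mu> x * (u x * u x + v x * v x) \<le> integ \<mu> (\<Omega>a \<union> \<Omega>b) (\<lambda>x. u x * u x + v x * v x)"
    unfolding integ_def using assms by (intro member_le_sum) (auto simp: less_imp_le)
  ultimately show ?thesis unfolding norm2_H_def inner_H_def by (simp add: power2_eq_square)
qed

lemma norm2_H_pos:
  assumes "weighted_graph w" "\<forall>x. \<mu> x > 0" "finite \<Omega>a" "finite \<Omega>b"
    and "(u, v) \<in> H_Om \<Omega>a \<Omega>b" "(u, v) \<noteq> (\<lambda>_. 0, \<lambda>_. 0)"
  shows "norm2_H w \<mu> \<Omega>a \<Omega>b u v > 0"
proof -
  obtain x where x: "u x \<noteq> 0 \<or> v x \<noteq> 0" using assms(6) by fastforce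
  then have "x \<in> \<Omega>a \<union> \<Omega>b" using assms(5) by (auto simp: H_Om_def W0_def)
  moreover have "\<mu> x * ((u x)\<^sup>2 + (v x)\<^sup>2) > 0"
    using x assms(2) by (auto simp: add_pos_nonneg add_nonneg_pos)
  ultimately show ?thesis using norm2_H_ge_point[OF assms(1-4)] by (meson less_le_trans)
qed

lemma compact_Pi_UNIV:
  fixes K :: "'a \<Rightarrow> 'b::topological_space set"
  assumes "\<And>i. compact (K i)"
  shows "compact (Pi UNIV K)"
proof -
  have "compactin (product_topology (\<lambda>i. euclidean) UNIV) (PiE UNIV K)"
    using assms by (simp add: compactin_PiE)
  then show ?thesis by (simp add: euclidean_product_topology PiE_UNIV_domain)
qed

lemma closed_W0: "closed (W0 \<Omega>)"
proof -
  have "W0 \<Omega> = (\<Inter>x\<in>-\<Omega>. {u. u x = 0})" by (auto simp: W0_def)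
  then show ?thesis by (auto intro!: closed_Collect_eq continuous_intros)
qed

lemma continuous_on_fst_apply[continuous_intros]:
  "continuous_on S (\<lambda>p :: ('a \<Rightarrow> 'b::topological_space) \<times> 'c::topological_space. fst p y)"
  by (rule continuous_on_compose2[OF continuous_on_product_coordinates continuous_on_fst[OF continuous_on_id]]) auto

lemma continuous_on_snd_apply[continuous_intros]:
  "continuous_on S (\<lambda>p :: 'c::topological_space \<times> ('a \<Rightarrow> 'b::topological_space). snd p y)"
  by (rule continuous_on_compose2[OF continuous_on_product_coordinates continuous_on_snd[OF continuous_on_id]]) auto

lemma continuous_on_abs_powr[continuous_intros]:
  fixes f :: "_ \<Rightarrow> real"
  assumes "continuous_on S f" "\<alpha> > 0"
  shows "continuous_on S (\<lambda>p. \<bar>f p\<bar> powr \<alpha>)"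
  by (rule continuous_on_powr') (use assms in \<open>auto intro!: continuous_intros\<close>)

lemma continuous_on_norm2_H: "continuous_on S (\<lambda>q. norm2_H w \<mu> \<Omega>a \<Omega>b (fst q) (snd q))"
  unfolding norm2_H_def inner_H_def integ_def Gam_def by (intro continuous_intros)

lemma continuous_on_coupling:
  assumes "\<alpha> > 0" "\<beta> > 0"
  shows "continuous_on S (\<lambda>q. coupling \<mu> \<Omega>a \<Omega>b \<alpha> \<beta> (fst q) (snd q))"
  unfolding coupling_def integ_def using assms by (intro continuous_intros)

lemma compact_H_Om_sublevel:
  assumes "weighted_graph w" "\<forall>x. \<mu> x > 0" "finite \<Omega>a" "finite \<Omega>b"
  shows "compact (H_Om \<Omega>a \<Omega>b \<inter> {q. norm2_H w \<mu> \<Omega>a \<Omega>b (fst q) (snd q) \<le> c})"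
proof -
  define K where "K \<Omega> x = (if x \<in> \<Omega> then {- sqrt (c / \<mu> x)..sqrt (c / \<mu> x)} else {0::real})" for \<Omega> x
  let ?box = "Pi UNIV (K \<Omega>a) \<times> Pi UNIV (K \<Omega>b)"
  let ?S = "H_Om \<Omega>a \<Omega>b \<inter> {q. norm2_H w \<mu> \<Omega>a \<Omega>b (fst q) (snd q) \<le> c}"
  have bound: "t \<in> {- sqrt (c / \<mu> x)..sqrt (c / \<mu> x)}" if "\<mu> x * t\<^sup>2 \<le> c" for t x
  proof -
    have "t\<^sup>2 \<le> c / \<mu> x" using that assms(2) by (simp add: pos_le_divide_eq mult.commute)
    then have "\<bar>t\<bar> \<le> sqrt (c / \<mu> x)" using real_sqrt_le_mono by fastforce
    then show ?thesis by (simp add: abs_le_iff)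
  qed
  have box: "(u, v) \<in> ?box" if uvH: "(u, v) \<in> H_Om \<Omega>a \<Omega>b" and uvc: "norm2_H w \<mu> \<Omega>a \<Omega>b u v \<le> c" for u v
  proof -
    have "u x \<in> K \<Omega>a x \<and> v x \<in> K \<Omega>b x" for x
    proof (cases "x \<in> \<Omega>a \<union> \<Omega>b")
      case True
      have "\<mu> x * (u x)\<^sup>2 + \<mu> x * (v x)\<^sup>2 \<le> c"
        using norm2_H_ge_point[OF assms True, of u v] uvc by (simp add: distrib_left)
      moreover have "\<mu> x * (u x)\<^sup>2 \<ge> 0" "\<mu> x * (v x)\<^sup>2 \<ge> 0"
        using assms(2) by (simp_all add: less_imp_le)
      ultimately have "u x \<in> {- sqrt (c / \<mu> x)..sqrt (c / \<mu> x)}" "v x \<in> {- sqrt (c / \<mu> x)..sqrt (c / \<mu> x)}"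
        by (intro bound; linarith)+
      then show ?thesis using uvH by (auto simp: K_def H_Om_def W0_def)
    next
      case False
      then show ?thesis using uvH by (simp add: K_def H_Om_def W0_def)
    qed
    then show ?thesis by simp
  qed
  have sub: "?S \<subseteq> ?box"
  proof
    fix q assume "q \<in> ?S"
    then have "(fst q, snd q) \<in> H_Om \<Omega>a \<Omega>b" "norm2_H w \<mu> \<Omega>a \<Omega>b (fst q) (snd q) \<le> c"
      by auto
    from box[OF this] show "q \<in> ?box" by (simp only: prod.collapse)
  qed
  have "compact ?box"
    by (intro compact_Times compact_Pi_UNIV) (auto simp: K_def)
  moreover have "closed ?S"
    unfolding H_Om_def
    by (intro closed_Int closed_Times closed_W0 closed_Collect_le continuous_on_norm2_H continuous_on_const)
  ultimately have "compact (?box \<inter> ?S)" by (rule compact_Int_closed)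
  then show ?thesis using sub by (simp only: Int_absorb1)
qed

section \<open>Minimizing the Rayleigh quotient\<close>

definition rayleigh_quotient ::
  "('v \<Rightarrow> 'v \<Rightarrow> real) \<Rightarrow> ('v \<Rightarrow> real) \<Rightarrow> 'v set \<Rightarrow> 'v set \<Rightarrow> real \<Rightarrow> real \<Rightarrow> ('v \<Rightarrow> real) \<Rightarrow> ('v \<Rightarrow> real) \<Rightarrow> real"
  where "rayleigh_quotient w \<mu> \<Omega>a \<Omega>b \<alpha> \<beta> u v =
    norm2_H w \<mu> \<Omega>a \<Omega>b u v / coupling \<mu> \<Omega>a \<Omega>b \<alpha> \<beta> u v powr (2 / (\<alpha> + \<beta>))"

lemma rayleigh_quotient_normalize:
  assumes "\<alpha> + \<beta> > 0" "coupling \<mu> \<Omega>a \<Omega>b \<alpha> \<beta> u v > 0"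
  defines "k \<equiv> coupling \<mu> \<Omega>a \<Omega>b \<alpha> \<beta> u v powr (-1 / (\<alpha> + \<beta>))"
  shows "coupling \<mu> \<Omega>a \<Omega>b \<alpha> \<beta> (\<lambda>x. k * u x) (\<lambda>x. k * v x) = 1"
    and "norm2_H w \<mu> \<Omega>a \<Omega>b (\<lambda>x. k * u x) (\<lambda>x. k * v x) = rayleigh_quotient w \<mu> \<Omega>a \<Omega>b \<alpha> \<beta> u v"
proof -
  let ?F = "coupling \<mu> \<Omega>a \<Omega>b \<alpha> \<beta> u v"
  have "\<bar>k\<bar> powr (\<alpha> + \<beta>) = ?F powr (-1)"
    using assms by (simp add: powr_powr)
  then show "coupling \<mu> \<Omega>a \<Omega>b \<alpha> \<beta> (\<lambda>x. k * u x) (\<lambda>x. k * v x) = 1"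
    unfolding coupling_scale using assms(2) by (simp add: powr_minus_divide)
  have "k\<^sup>2 = k powr 2" using assms by (simp add: powr_numeral)
  also have "\<dots> = ?F powr (- (2 / (\<alpha> + \<beta>)))" unfolding k_def by (simp add: powr_powr)
  finally show "norm2_H w \<mu> \<Omega>a \<Omega>b (\<lambda>x. k * u x) (\<lambda>x. k * v x) = rayleigh_quotient w \<mu> \<Omega>a \<Omega>b \<alpha> \<beta> u v"
    unfolding norm2_H_scale rayleigh_quotient_def by (simp add: powr_minus divide_inverse)
qed

lemma rayleigh_quotient_minimizer_exists:
  assumes "weighted_graph w" "\<forall>x. \<mu> x > 0" "finite \<Omega>a" "finite \<Omega>b" "\<Omega>a \<inter> \<Omega>b \<noteq> {}"
    and "\<alpha> > 0" "\<beta> > 0"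
  obtains us vs where "(us, vs) \<in> H_Om \<Omega>a \<Omega>b" "coupling \<mu> \<Omega>a \<Omega>b \<alpha> \<beta> us vs = 1"
    "\<And>u v. (u, v) \<in> H_Om \<Omega>a \<Omega>b \<Longrightarrow> coupling \<mu> \<Omega>a \<Omega>b \<alpha> \<beta> u v > 0 \<Longrightarrow>
       norm2_H w \<mu> \<Omega>a \<Omega>b us vs \<le> rayleigh_quotient w \<mu> \<Omega>a \<Omega>b \<alpha> \<beta> u v"
proof -
  let ?H = "H_Om \<Omega>a \<Omega>b" and ?N = "norm2_H w \<mu> \<Omega>a \<Omega>b" and ?F = "coupling \<mu> \<Omega>a \<Omega>b \<alpha> \<beta>"
    and ?Q = "rayleigh_quotient w \<mu> \<Omega>a \<Omega>b \<alpha> \<beta>"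
    and ?k = "\<lambda>u v. coupling \<mu> \<Omega>a \<Omega>b \<alpha> \<beta> u v powr (-1 / (\<alpha> + \<beta>))"
  have "\<alpha> + \<beta> > 0" using assms by simp
  note normalize = rayleigh_quotient_normalize[OF this]
  obtain x0 where x0: "x0 \<in> \<Omega>a" "x0 \<in> \<Omega>b" using assms(5) by auto
  define \<delta> where "\<delta> = (\<lambda>x. if x = x0 then 1::real else 0)"
  have \<delta>H: "(\<delta>, \<delta>) \<in> ?H" using x0 by (auto simp: H_Om_def W0_def \<delta>_def)
  have "?F \<delta> \<delta> = (\<Sum>x\<in>\<Omega>a \<union> \<Omega>b. if x = x0 then \<mu> x0 else 0)"
    unfolding coupling_def integ_def by (rule sum.cong) (auto simp: \<delta>_def)
  then have \<delta>F: "?F \<delta> \<delta> > 0" using assms(2-4) x0 by simp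
  define S where "S = (?H \<inter> {q. ?N (fst q) (snd q) \<le> ?Q \<delta> \<delta>}) \<inter> {q. ?F (fst q) (snd q) = 1}"
  have scaled_in_S: "(\<lambda>x. ?k u v * u x, \<lambda>x. ?k u v * v x) \<in> S"
    if "(u, v) \<in> ?H" "?F u v > 0" "?Q u v \<le> ?Q \<delta> \<delta>" for u v
  proof -
    have "?N (\<lambda>x. ?k u v * u x) (\<lambda>x. ?k u v * v x) \<le> ?Q \<delta> \<delta>"
      using normalize(2)[OF that(2), where w = w] that(3) by linarith
    then show ?thesis
      using H_Om_scale[OF that(1)] normalize(1)[OF that(2)] unfolding S_def
      by (intro IntI CollectI) (simp_all only: fst_conv snd_conv)
  qed
  have "compact S"
    unfolding S_def using assms(6,7)
    by (intro compact_Int_closed compact_H_Om_sublevel[OF assms(1-4)] closed_Collect_eq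
        continuous_on_coupling continuous_on_const) auto
  moreover have "S \<noteq> {}" using scaled_in_S[OF \<delta>H \<delta>F order_refl] by blast
  ultimately have "\<exists>qs\<in>S. \<forall>q\<in>S. ?N (fst qs) (snd qs) \<le> ?N (fst q) (snd q)"
    by (intro continuous_attains_inf continuous_on_norm2_H)
  then obtain qs where qs: "qs \<in> S" "\<And>q. q \<in> S \<Longrightarrow> ?N (fst qs) (snd qs) \<le> ?N (fst q) (snd q)"
    by blast
  show thesis
  proof (rule that)
    show "(fst qs, snd qs) \<in> ?H" "?F (fst qs) (snd qs) = 1" using qs(1) unfolding S_def by auto
    fix u v assume uvH: "(u, v) \<in> ?H" and uvF: "?F u v > 0"
    show "?N (fst qs) (snd qs) \<le> ?Q u v"
    proof (cases "?Q u v \<le> ?Q \<delta> \<delta>")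
      case True
      show ?thesis
        using qs(2)[OF scaled_in_S[OF uvH uvF True], unfolded fst_conv snd_conv]
          normalize(2)[OF uvF, where w = w] by linarith
    next
      case False
      then show ?thesis using qs(1) unfolding S_def by auto
    qed
  qed
qed

lemma rayleigh_minimizer_euler_lagrange:
  assumes "\<alpha> > 1" "\<beta> > 1"
    and usH: "(us, vs) \<in> H_Om \<Omega>a \<Omega>b" and usF: "coupling \<mu> \<Omega>a \<Omega>b \<alpha> \<beta> us vs = 1"
    and min: "\<And>u v. (u, v) \<in> H_Om \<Omega>a \<Omega>b \<Longrightarrow> coupling \<mu> \<Omega>a \<Omega>b \<alpha> \<beta> u v > 0 \<Longrightarrow>
       norm2_H w \<mu> \<Omega>a \<Omega>b us vs \<le> rayleigh_quotient w \<mu> \<Omega>a \<Omega>b \<alpha> \<beta> u v"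
    and \<xi>H: "(\<xi>, \<eta>) \<in> H_Om \<Omega>a \<Omega>b"
  shows "inner_H w \<mu> \<Omega>a \<Omega>b us vs \<xi> \<eta>
    = norm2_H w \<mu> \<Omega>a \<Omega>b us vs * coupling_deriv \<mu> \<Omega>a \<Omega>b \<alpha> \<beta> us vs \<xi> \<eta> / (\<alpha> + \<beta>)"
proof -
  define p where "p = \<alpha> + \<beta>"
  define B where "B = inner_H w \<mu> \<Omega>a \<Omega>b us vs \<xi> \<eta>"
  define D where "D = coupling_deriv \<mu> \<Omega>a \<Omega>b \<alpha> \<beta> us vs \<xi> \<eta>"
  define N where "N s = norm2_H w \<mu> \<Omega>a \<Omega>b (\<lambda>x. us x + s * \<xi> x) (\<lambda>x. vs x + s * \<eta> x)" for s
  define F where "F s = coupling \<mu> \<Omega>a \<Omega>b \<alpha> \<beta> (\<lambda>x. us x + s * \<xi> x) (\<lambda>x. vs x + s * \<eta> x)" for s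
  have N': "(N has_real_derivative 2 * B) (at 0)"
    unfolding N_def B_def by (rule norm2_H_has_real_derivative)
  have F': "(F has_real_derivative D) (at 0)"
    unfolding F_def D_def by (rule coupling_has_real_derivative[OF assms(1,2)])
  have F0: "F 0 = 1" using usF by (simp add: F_def)
  have "((\<lambda>s. N s / F s powr (2 / p)) has_real_derivative 2 * B - N 0 * (2 / p * D)) (at 0)"
    using DERIV_divide[OF N' DERIV_fun_powr[OF F', of "2 / p"]] F0 by simp
  moreover obtain d where "d > 0" and Fpos: "\<And>s. s \<noteq> 0 \<Longrightarrow> dist s 0 < d \<Longrightarrow> F s > 0"
  proof -
    have "(F \<longlongrightarrow> F 0) (at 0)" using DERIV_isCont[OF F'] by (simp add: isCont_def)
    then have "\<forall>\<^sub>F s in at 0. F s > 0" using F0 by (intro order_tendstoD) auto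
    then show thesis using that unfolding eventually_at by blast
  qed
  moreover have "N 0 / F 0 powr (2 / p) \<le> N s / F s powr (2 / p)" if "\<bar>0 - s\<bar> < d" for s
  proof (cases "s = 0")
    case False
    then have "N 0 \<le> rayleigh_quotient w \<mu> \<Omega>a \<Omega>b \<alpha> \<beta> (\<lambda>x. us x + s * \<xi> x) (\<lambda>x. vs x + s * \<eta> x)"
      using min H_Om_add_scaled[OF usH \<xi>H] Fpos that unfolding N_def F_def by (simp add: dist_real_def)
    then show ?thesis using F0 unfolding rayleigh_quotient_def N_def F_def p_def by simp
  qed simp
  ultimately have "2 * B - N 0 * (2 / p * D) = 0" by (intro DERIV_local_min) auto
  then show ?thesis
    using assms(1,2) unfolding B_def D_def N_def p_def by (simp add: field_simps)
qed

section \<open>Ground states\<close>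

lemma J_Om_nehari:
  assumes "\<alpha> > 1" "\<beta> > 1" "(u, v) \<in> nehari w \<mu> \<Omega>a \<Omega>b \<alpha> \<beta>"
  shows "J_Om w \<mu> \<Omega>a \<Omega>b \<alpha> \<beta> u v = (1 / 2 - 1 / (\<alpha> + \<beta>)) * norm2_H w \<mu> \<Omega>a \<Omega>b u v"
  using assms unfolding nehari_iff[OF assms(1,2)] J_Om_eq by (simp add: algebra_simps)

lemma rayleigh_minimizer_le_nehari:
  assumes "weighted_graph w" "\<forall>x. \<mu> x > 0" "finite \<Omega>a" "finite \<Omega>b" "\<alpha> > 1" "\<beta> > 1"
    and min: "\<And>u v. (u, v) \<in> H_Om \<Omega>a \<Omega>b \<Longrightarrow> coupling \<mu> \<Omega>a \<Omega>b \<alpha> \<beta> u v > 0 \<Longrightarrow>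
       norm2_H w \<mu> \<Omega>a \<Omega>b us vs \<le> rayleigh_quotient w \<mu> \<Omega>a \<Omega>b \<alpha> \<beta> u v"
    and "norm2_H w \<mu> \<Omega>a \<Omega>b us vs > 0"
    and uv: "(u, v) \<in> nehari w \<mu> \<Omega>a \<Omega>b \<alpha> \<beta>"
  shows "norm2_H w \<mu> \<Omega>a \<Omega>b us vs powr ((\<alpha> + \<beta>) / (\<alpha> + \<beta> - 2)) \<le> norm2_H w \<mu> \<Omega>a \<Omega>b u v"
proof -
  define p where "p = \<alpha> + \<beta>"
  define A where "A = norm2_H w \<mu> \<Omega>a \<Omega>b u v"
  have p2: "p > 2" using assms(5,6) by (simp add: p_def)
  have uvH: "(u, v) \<in> H_Om \<Omega>a \<Omega>b" and A: "A = coupling \<mu> \<Omega>a \<Omega>b \<alpha> \<beta> u v" and "(u, v) \<noteq> (\<lambda>_. 0, \<lambda>_. 0)"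
    using uv unfolding nehari_iff[OF assms(5,6)] A_def by auto
  then have Apos: "A > 0" unfolding A_def using norm2_H_pos[OF assms(1-4)] by blast
  have "norm2_H w \<mu> \<Omega>a \<Omega>b us vs \<le> A / A powr (2 / p)"
    using min[OF uvH] A Apos unfolding rayleigh_quotient_def p_def A_def by simp
  also have "\<dots> = A powr (1 - 2 / p)" using Apos by (simp add: powr_diff)
  finally have "norm2_H w \<mu> \<Omega>a \<Omega>b us vs powr (p / (p - 2)) \<le> (A powr (1 - 2 / p)) powr (p / (p - 2))"
    using assms(8) p2 by (intro powr_mono2) auto
  also have "\<dots> = A"
    using Apos p2 by (simp add: powr_powr field_simps)
  finally show ?thesis unfolding A_def p_def .
qed

lemma scaling_factor_powr:
  fixes N p :: real
  assumes "N > 0" "p > 2"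
  defines "t \<equiv> N powr (1 / (p - 2))"
  shows "t > 0" "t powr (p - 1) = t * N" "t powr p = t\<^sup>2 * N" "t powr p = N powr (p / (p - 2))"
proof -
  show tpos: "t > 0" using assms(1) by (simp add: t_def)
  have t2: "t powr (p - 2) = N" using assms by (simp add: t_def powr_powr)
  have "t powr (p - 1) = t powr (p - 2) * t powr 1" unfolding powr_add[symmetric] by simp
  then show "t powr (p - 1) = t * N" using tpos t2 by simp
  have "t powr p = t powr (p - 2) * t powr 2" unfolding powr_add[symmetric] by simp
  then show "t powr p = t\<^sup>2 * N" using tpos t2 by (simp add: powr_numeral)
  show "t powr p = N powr (p / (p - 2))" using assms(1) by (simp add: t_def powr_powr)
qed

lemma weak_solution_scaled_rayleigh_minimizer:
  assumes "\<alpha> > 1" "\<beta> > 1"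
    and usH: "(us, vs) \<in> H_Om \<Omega>a \<Omega>b" and usF: "coupling \<mu> \<Omega>a \<Omega>b \<alpha> \<beta> us vs = 1"
    and min: "\<And>u v. (u, v) \<in> H_Om \<Omega>a \<Omega>b \<Longrightarrow> coupling \<mu> \<Omega>a \<Omega>b \<alpha> \<beta> u v > 0 \<Longrightarrow>
       norm2_H w \<mu> \<Omega>a \<Omega>b us vs \<le> rayleigh_quotient w \<mu> \<Omega>a \<Omega>b \<alpha> \<beta> u v"
    and Npos: "norm2_H w \<mu> \<Omega>a \<Omega>b us vs > 0"
  defines "t \<equiv> norm2_H w \<mu> \<Omega>a \<Omega>b us vs powr (1 / (\<alpha> + \<beta> - 2))"
  shows "weak_solution w \<mu> \<Omega>a \<Omega>b \<alpha> \<beta> (\<lambda>x. t * us x) (\<lambda>x. t * vs x)"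
  unfolding weak_solution_iff
proof (intro conjI allI impI)
  have "\<alpha> + \<beta> > 2" using assms(1,2) by simp
  note t = scaling_factor_powr[OF Npos this, folded t_def]
  show "(\<lambda>x. t * us x, \<lambda>x. t * vs x) \<in> H_Om \<Omega>a \<Omega>b" using H_Om_scale[OF usH] .
  fix \<xi> \<eta> assume \<xi>H: "(\<xi>, \<eta>) \<in> H_Om \<Omega>a \<Omega>b"
  have "inner_H w \<mu> \<Omega>a \<Omega>b (\<lambda>x. t * us x) (\<lambda>x. t * vs x) \<xi> \<eta>
      = t * norm2_H w \<mu> \<Omega>a \<Omega>b us vs * coupling_deriv \<mu> \<Omega>a \<Omega>b \<alpha> \<beta> us vs \<xi> \<eta> / (\<alpha> + \<beta>)"
    using rayleigh_minimizer_euler_lagrange[OF assms(1,2) usH usF min \<xi>H] by (simp add: inner_H_scale)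
  also have "\<dots> = coupling_deriv \<mu> \<Omega>a \<Omega>b \<alpha> \<beta> (\<lambda>x. t * us x) (\<lambda>x. t * vs x) \<xi> \<eta> / (\<alpha> + \<beta>)"
    using t(2) by (simp add: coupling_deriv_scale[OF t(1)])
  finally show "inner_H w \<mu> \<Omega>a \<Omega>b (\<lambda>x. t * us x) (\<lambda>x. t * vs x) \<xi> \<eta>
      = coupling_deriv \<mu> \<Omega>a \<Omega>b \<alpha> \<beta> (\<lambda>x. t * us x) (\<lambda>x. t * vs x) \<xi> \<eta> / (\<alpha> + \<beta>)" .
qed

lemma nehari_scaled_rayleigh_minimizer:
  assumes "\<alpha> > 1" "\<beta> > 1"
    and usH: "(us, vs) \<in> H_Om \<Omega>a \<Omega>b" and usF: "coupling \<mu> \<Omega>a \<Omega>b \<alpha> \<beta> us vs = 1"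
    and Npos: "norm2_H w \<mu> \<Omega>a \<Omega>b us vs > 0"
  defines "t \<equiv> norm2_H w \<mu> \<Omega>a \<Omega>b us vs powr (1 / (\<alpha> + \<beta> - 2))"
  shows "(\<lambda>x. t * us x, \<lambda>x. t * vs x) \<in> nehari w \<mu> \<Omega>a \<Omega>b \<alpha> \<beta>"
    and "norm2_H w \<mu> \<Omega>a \<Omega>b (\<lambda>x. t * us x) (\<lambda>x. t * vs x)
      = norm2_H w \<mu> \<Omega>a \<Omega>b us vs powr ((\<alpha> + \<beta>) / (\<alpha> + \<beta> - 2))"
proof -
  have "\<alpha> + \<beta> > 2" using assms(1,2) by simp
  note t = scaling_factor_powr[OF Npos this, folded t_def]
  have norm2_t: "norm2_H w \<mu> \<Omega>a \<Omega>b (\<lambda>x. t * us x) (\<lambda>x. t * vs x) = t powr (\<alpha> + \<beta>)"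
    using t(3) by (simp add: norm2_H_scale)
  show "norm2_H w \<mu> \<Omega>a \<Omega>b (\<lambda>x. t * us x) (\<lambda>x. t * vs x)
      = norm2_H w \<mu> \<Omega>a \<Omega>b us vs powr ((\<alpha> + \<beta>) / (\<alpha> + \<beta> - 2))"
    using norm2_t t(4) by simp
  have "(us, vs) \<noteq> (\<lambda>_. 0, \<lambda>_. 0)" using usF by (auto simp: coupling_def integ_def)
  then have "(\<lambda>x. t * us x, \<lambda>x. t * vs x) \<noteq> (\<lambda>_. 0, \<lambda>_. 0)" using t(1) by (auto simp: fun_eq_iff)
  then show "(\<lambda>x. t * us x, \<lambda>x. t * vs x) \<in> nehari w \<mu> \<Omega>a \<Omega>b \<alpha> \<beta>"
    unfolding nehari_iff[OF assms(1,2)] using H_Om_scale[OF usH] norm2_t t(1) usF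
    by (simp add: coupling_scale)
qed

lemma ground_state_of_rayleigh_minimizer:
  assumes wg: "weighted_graph w" and \<mu>: "\<forall>x. \<mu> x > 0" and fin: "finite \<Omega>a" "finite \<Omega>b"
    and \<alpha>\<beta>: "\<alpha> > 1" "\<beta> > 1"
    and usH: "(us, vs) \<in> H_Om \<Omega>a \<Omega>b" and usF: "coupling \<mu> \<Omega>a \<Omega>b \<alpha> \<beta> us vs = 1"
    and min: "\<And>u v. (u, v) \<in> H_Om \<Omega>a \<Omega>b \<Longrightarrow> coupling \<mu> \<Omega>a \<Omega>b \<alpha> \<beta> u v > 0 \<Longrightarrow>
       norm2_H w \<mu> \<Omega>a \<Omega>b us vs \<le> rayleigh_quotient w \<mu> \<Omega>a \<Omega>b \<alpha> \<beta> u v"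
  defines "t \<equiv> norm2_H w \<mu> \<Omega>a \<Omega>b us vs powr (1 / (\<alpha> + \<beta> - 2))"
  shows "weak_solution w \<mu> \<Omega>a \<Omega>b \<alpha> \<beta> (\<lambda>x. t * us x) (\<lambda>x. t * vs x)
    \<and> (\<lambda>x. t * us x, \<lambda>x. t * vs x) \<in> nehari w \<mu> \<Omega>a \<Omega>b \<alpha> \<beta>
    \<and> J_Om w \<mu> \<Omega>a \<Omega>b \<alpha> \<beta> (\<lambda>x. t * us x) (\<lambda>x. t * vs x) = c_nehari w \<mu> \<Omega>a \<Omega>b \<alpha> \<beta>"
proof -
  have "(us, vs) \<noteq> (\<lambda>_. 0, \<lambda>_. 0)" using usF by (auto simp: coupling_def integ_def)
  then have Npos: "norm2_H w \<mu> \<Omega>a \<Omega>b us vs > 0" by (rule norm2_H_pos[OF wg \<mu> fin usH])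
  note UV = nehari_scaled_rayleigh_minimizer[OF \<alpha>\<beta> usH usF Npos, folded t_def]
  have "1 / 2 - 1 / (\<alpha> + \<beta>) > 0" using \<alpha>\<beta> by (simp add: field_simps)
  then have "J_Om w \<mu> \<Omega>a \<Omega>b \<alpha> \<beta> (\<lambda>x. t * us x) (\<lambda>x. t * vs x) \<le> J_Om w \<mu> \<Omega>a \<Omega>b \<alpha> \<beta> u v"
    if uv: "(u, v) \<in> nehari w \<mu> \<Omega>a \<Omega>b \<alpha> \<beta>" for u v
    using J_Om_nehari[OF \<alpha>\<beta> UV(1)] J_Om_nehari[OF \<alpha>\<beta> uv] UV(2)
      rayleigh_minimizer_le_nehari[OF wg \<mu> fin \<alpha>\<beta> min Npos uv] by simp
  then have "J_Om w \<mu> \<Omega>a \<Omega>b \<alpha> \<beta> (\<lambda>x. t * us x) (\<lambda>x. t * vs x) = c_nehari w \<mu> \<Omega>a \<Omega>b \<alpha> \<beta>"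
    unfolding c_nehari_def using UV(1) by (intro cInf_eq_minimum[symmetric]) auto
  then show ?thesis
    using UV(1) weak_solution_scaled_rayleigh_minimizer[OF \<alpha>\<beta> usH usF min Npos] unfolding t_def by blast
qed

theorem theorem1p2:
  fixes w :: "'v \<Rightarrow> 'v \<Rightarrow> real" and \<mu> :: "'v \<Rightarrow> real" and \<mu>min \<alpha> \<beta> :: real
    and \<Omega>a \<Omega>b :: "'v set"
  assumes "weighted_graph w" and "locally_finite w" and "graph_connected w"
    and "\<mu>min > 0" and "\<forall>x. \<mu> x \<ge> \<mu>min"
    and "\<alpha> > 1" and "\<beta> > 1"
    and "\<Omega>a \<noteq> {}" and "\<Omega>b \<noteq> {}" and "\<Omega>a \<inter> \<Omega>b \<noteq> {}"
    and "bounded_domain w \<Omega>a" and "bounded_domain w \<Omega>b" and "bounded_domain w (\<Omega>a \<inter> \<Omega>b)"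
  shows "\<exists>u v. weak_solution w \<mu> \<Omega>a \<Omega>b \<alpha> \<beta> u v
           \<and> (u, v) \<in> nehari w \<mu> \<Omega>a \<Omega>b \<alpha> \<beta>
           \<and> J_Om w \<mu> \<Omega>a \<Omega>b \<alpha> \<beta> u v = c_nehari w \<mu> \<Omega>a \<Omega>b \<alpha> \<beta>"
proof -
  have fin: "finite \<Omega>a" "finite \<Omega>b"
    using bounded_domain_finite assms(2,11,12) by blast+
  have \<mu>: "\<forall>x. \<mu> x > 0" using assms(4,5) by (meson less_le_trans)
  obtain us vs where "(us, vs) \<in> H_Om \<Omega>a \<Omega>b" "coupling \<mu> \<Omega>a \<Omega>b \<alpha> \<beta> us vs = 1"
    "\<And>u v. (u, v) \<in> H_Om \<Omega>a \<Omega>b \<Longrightarrow> coupling \<mu> \<Omega>a \<Omega>b \<alpha> \<beta> u v > 0 \<Longrightarrow>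
       norm2_H w \<mu> \<Omega>a \<Omega>b us vs \<le> rayleigh_quotient w \<mu> \<Omega>a \<Omega>b \<alpha> \<beta> u v"
    by (rule rayleigh_quotient_minimizer_exists[OF assms(1) \<mu> fin assms(10)]) (use assms(6,7) in auto)
  from ground_state_of_rayleigh_minimizer[OF assms(1) \<mu> fin assms(6,7) this] show ?thesis by blast
qed

end
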